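(* Let $\mathcal H_k$ be a family of $k$-wise independent functions $[n]\to[n]$ with $k\ge 2\log n$. Let $t<n/2$, let $j=\lfloor \log(n/2t)\rfloor$, and let $T=\{x_1,\dots,x_t\}\subseteq[n]$ be a set of $t$ distinct cards (the cards remaining in the deck, with $x_1$ the next card to be drawn). For $h\in\mathcal H_k$ let $S^h_j=\{x\in[n] : 2^{j-1} < h(x)\le 2^j\}$. Then $$\Pr_{h\sim\mathcal H_k}\Big[S^h_j\cap T=\{x_1\}\ \Big|\ |S^h_j\cap T|=1\Big]\ \ge\ \frac{1}{t+o(1)},$$ where $o(1)\to 0$ as $n\to\infty$.
   Context: A family $\mathcal H_k$ of functions $h:[n]\to[n]$ is $k$-wise independent if for every $k$ distinct $x_1,\dots,x_k\in[n]$ and every $y_1,\dots,y_k\in[n]$, $\Pr_{h\sim\mathcal H_k}[(h(x_1),\dots,h(x_k))=(y_1,\dots,y_k)]=n^{-k}$. $\log$ is base 2. *)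

theory Defs
  imports "HOL-Probability.Probability" "HOL-Library.FuncSet"
begin

text \<open>[n] is rendered as {1..n}. A family of functions [n] -> [n] is a finite nonempty
set of extensional functions; h is drawn uniformly from it.\<close>

definition kwise_indep :: "nat \<Rightarrow> nat \<Rightarrow> (nat \<Rightarrow> nat) set \<Rightarrow> bool" where
  "kwise_indep n k H \<longleftrightarrow>
     finite H \<and> H \<noteq> {} \<and> H \<subseteq> {1..n} \<rightarrow>\<^sub>E {1..n} \<and>
     (\<forall>xs ys. length xs = k \<and> length ys = k \<and> distinct xs \<and>
        set xs \<subseteq> {1..n} \<and> set ys \<subseteq> {1..n} \<longrightarrow>
        measure_pmf.prob (pmf_of_set H) {h. map h xs = ys} = 1 / real n ^ k)"

definition level_set :: "nat \<Rightarrow> (nat \<Rightarrow> nat) \<Rightarrow> nat \<Rightarrow> nat set" where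
  "level_set n h j = {x \<in> {1..n}. 2 powr (real j - 1) < real (h x) \<and> real (h x) \<le> 2 ^ j}"

definition cond_prob :: "(nat \<Rightarrow> nat) set \<Rightarrow> ((nat \<Rightarrow> nat) \<Rightarrow> bool) \<Rightarrow> ((nat \<Rightarrow> nat) \<Rightarrow> bool) \<Rightarrow> real" where
  "cond_prob H A B = measure_pmf.prob (pmf_of_set H) {h. A h \<and> B h} /
                      measure_pmf.prob (pmf_of_set H) {h. B h}"

end

theory Submission
  imports Defs
begin

text \<open>Let L = (2^(j-1), 2^j] be the level interval and p = |L|/n, so that 2tp \<le> 1.
  That x is the only card of T hashed into L means h x \<in> L and h y \<notin> L for the other
  t - 1 cards. The Bonferroni inequalities bound the number of such h from above and below by
  truncations of the inclusion-exclusion expansion of |H| p (1 - p)^(t-1); each term concerns at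
  most k points, so k-wise independence evaluates it exactly. These bounds do not depend on x,
  and truncating after r and r - 1 terms (r odd, r close to k) they differ by
  |H| C(t-1,r) p^(r+1) \<le> |H| p 2^(-r), a 2^(1-r) fraction of the count itself (which is
  at least |H| p/2). So all t cards are almost equally likely to be the unique one, and the
  conditional probability for x1 is at least 1/(t (1 + 2^(1-r))) \<ge> 1/(t + 4/n), as 2^k \<ge> n^2.\<close>

lemma sum_subsets_by_card:
  fixes g :: "nat \<Rightarrow> 'b::comm_semiring_1"
  assumes "finite A"
  shows "(\<Sum>U | U \<subseteq> A \<and> card U \<le> r. g (card U)) = (\<Sum>i\<le>r. of_nat (card A choose i) * g i)"
proof -
  have fin: "finite {U. U \<subseteq> A \<and> card U \<le> r}"
    using assms by simp
  have "(\<Sum>U | U \<subseteq> A \<and> card U \<le> r. g (card U))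
      = (\<Sum>i\<le>r. \<Sum>U | U \<in> {U. U \<subseteq> A \<and> card U \<le> r} \<and> card U = i. g (card U))"
    by (rule sum.group[symmetric]) (use fin in auto)
  also have "\<dots> = (\<Sum>i\<le>r. \<Sum>U | U \<subseteq> A \<and> card U = i. g i)"
    by (intro sum.cong) auto
  also have "\<dots> = (\<Sum>i\<le>r. of_nat (card A choose i) * g i)"
    using n_subsets[OF assms] by simp
  finally show ?thesis .
qed

lemma alternating_sum_subsets_bounds:
  assumes "finite W"
  shows "odd r \<Longrightarrow> (\<Sum>U | U \<subseteq> W \<and> card U \<le> r. (-1::real) ^ card U) \<le> (if W = {} then 1 else 0)"
    and "even r \<Longrightarrow> (if W = {} then 1 else 0) \<le> (\<Sum>U | U \<subseteq> W \<and> card U \<le> r. (-1::real) ^ card U)"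
proof -
  have sum_eq: "(\<Sum>U | U \<subseteq> W \<and> card U \<le> r. (-1::real) ^ card U)
      = (if W = {} then 1 else (-1) ^ r * real (card W - 1 choose r))"
  proof (cases "W = {}")
    case False
    then obtain m where m: "card W = Suc m"
      using assms by (metis card_0_eq not0_implies_Suc)
    have "(\<Sum>U | U \<subseteq> W \<and> card U \<le> r. (-1::real) ^ card U)
        = (\<Sum>i\<le>r. (real (Suc m) gchoose i) * (-1) ^ i)"
      using sum_subsets_by_card[OF assms, where g = "\<lambda>i. (-1::real) ^ i" and r = r] by (simp add: m binomial_gbinomial)
    also have "\<dots> = (-1) ^ r * real (m choose r)"
      using gbinomial_sum_lower_neg[of "real (Suc m)" r] by (simp add: binomial_gbinomial)
    finally show ?thesis using False m by simp
  next
    case True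
    then have "{U. U \<subseteq> W \<and> card U \<le> r} = {{}}" by auto
    then show ?thesis using True by simp
  qed
  show "odd r \<Longrightarrow> (\<Sum>U | U \<subseteq> W \<and> card U \<le> r. (-1::real) ^ card U) \<le> (if W = {} then 1 else 0)"
    and "even r \<Longrightarrow> (if W = {} then 1 else 0) \<le> (\<Sum>U | U \<subseteq> W \<and> card U \<le> r. (-1::real) ^ card U)"
    unfolding sum_eq by auto
qed

lemma bonferroni_card:
  fixes P :: "'a \<Rightarrow> 'b \<Rightarrow> bool" and r :: nat
  assumes "finite H" "finite Y"
  defines "B \<equiv> (\<Sum>U | U \<subseteq> Y \<and> card U \<le> r. (-1) ^ card U * real (card {h\<in>H. \<forall>y\<in>U. P h y}))"
  shows "odd r \<Longrightarrow> B \<le> real (card {h\<in>H. \<forall>y\<in>Y. \<not> P h y})"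
    and "even r \<Longrightarrow> real (card {h\<in>H. \<forall>y\<in>Y. \<not> P h y}) \<le> B"
proof -
  define W where "W h = {y\<in>Y. P h y}" for h
  have fW: "finite (W h)" for h
    using assms(2) by (simp add: W_def)
  have card_as_sum: "real (card {h\<in>H. Q h}) = (\<Sum>h\<in>H. if Q h then 1 else 0)" for Q
    using assms(1) by (simp add: sum.If_cases Int_def conj_commute)
  have subsets_W: "{U. U \<subseteq> Y \<and> card U \<le> r} \<inter> {U. \<forall>y\<in>U. P h y} = {U. U \<subseteq> W h \<and> card U \<le> r}" for h
    by (auto simp: W_def)
  have "B = (\<Sum>U | U \<subseteq> Y \<and> card U \<le> r. \<Sum>h\<in>H. (-1::real) ^ card U * (if \<forall>y\<in>U. P h y then 1 else 0))"
    unfolding B_def card_as_sum by (simp add: sum_distrib_left)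
  also have "\<dots> = (\<Sum>h\<in>H. \<Sum>U | U \<subseteq> Y \<and> card U \<le> r. (-1::real) ^ card U * (if \<forall>y\<in>U. P h y then 1 else 0))"
    by (rule sum.swap)
  also have "\<dots> = (\<Sum>h\<in>H. \<Sum>U | U \<subseteq> W h \<and> card U \<le> r. (-1::real) ^ card U)"
  proof (rule sum.cong[OF refl])
    fix h assume "h \<in> H"
    have "finite {U. U \<subseteq> Y \<and> card U \<le> r}"
      using assms(2) by simp
    then show "(\<Sum>U | U \<subseteq> Y \<and> card U \<le> r. (-1::real) ^ card U * (if \<forall>y\<in>U. P h y then 1 else 0))
        = (\<Sum>U | U \<subseteq> W h \<and> card U \<le> r. (-1::real) ^ card U)"
      unfolding subsets_W[symmetric] by (subst sum.inter_restrict) (auto intro!: sum.cong)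
  qed
  finally have B_eq: "B = (\<Sum>h\<in>H. \<Sum>U | U \<subseteq> W h \<and> card U \<le> r. (-1::real) ^ card U)" .
  have none_eq: "real (card {h\<in>H. \<forall>y\<in>Y. \<not> P h y}) = (\<Sum>h\<in>H. if W h = {} then 1 else 0)"
    unfolding card_as_sum by (simp add: W_def Ball_def)
  show "odd r \<Longrightarrow> B \<le> real (card {h\<in>H. \<forall>y\<in>Y. \<not> P h y})"
    unfolding B_eq none_eq by (intro sum_mono alternating_sum_subsets_bounds(1)[OF fW])
  show "even r \<Longrightarrow> real (card {h\<in>H. \<forall>y\<in>Y. \<not> P h y}) \<le> B"
    unfolding B_eq none_eq by (intro sum_mono alternating_sum_subsets_bounds(2)[OF fW])
qed

lemma measure_pmf_of_set_Collect:
  assumes "finite H" "H \<noteq> {}"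
  shows "measure_pmf.prob (pmf_of_set H) {h. Q h} = real (card {h\<in>H. Q h}) / real (card H)"
proof -
  have "H \<inter> {h. Q h} = {h\<in>H. Q h}" by auto
  then show ?thesis using measure_pmf_of_set[OF assms(2,1)] by simp
qed

lemma card_preimage_const_fibres:
  assumes "finite H" "finite Ys" "\<And>y. y \<in> Ys \<Longrightarrow> real (card {h\<in>H. f h = y}) = c"
  shows "real (card {h\<in>H. f h \<in> Ys}) = real (card Ys) * c"
proof -
  have "{h\<in>H. f h \<in> Ys} = (\<Union>y\<in>Ys. {h\<in>H. f h = y})" by auto
  then have "card {h\<in>H. f h \<in> Ys} = (\<Sum>y\<in>Ys. card {h\<in>H. f h = y})"
    using assms(1,2) by (auto intro!: card_UN_disjoint)
  then show ?thesis using assms(3) by (simp add: of_nat_sum)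
qed

lemma kwise_indep_card:
  assumes "kwise_indep n k H" "distinct xs" "length xs = k" "set xs \<subseteq> {1..n}"
    and "length ys = k" "set ys \<subseteq> {1..n}"
  shows "real (card {h\<in>H. map h xs = ys}) = real (card H) / real n ^ k"
proof -
  have H: "finite H" "H \<noteq> {}" and prob: "measure_pmf.prob (pmf_of_set H) {h. map h xs = ys} = 1 / real n ^ k"
    using assms unfolding kwise_indep_def by blast+
  then have "card H > 0" by (simp add: card_gt_0_iff)
  then show ?thesis using prob by (simp add: measure_pmf_of_set_Collect[OF H] field_simps)
qed

lemma obtain_distinct_extension:
  assumes "distinct xs" "set xs \<subseteq> A" "finite A" "length xs \<le> k" "k \<le> card A"
  obtains zs where "distinct (xs @ zs)" "length zs = k - length xs" "set zs \<subseteq> A"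
proof -
  have "k - length xs \<le> card (A - set xs)"
    using assms by (simp add: card_Diff_subset distinct_card)
  then obtain Z where Z: "Z \<subseteq> A - set xs" "card Z = k - length xs" "finite Z"
    by (rule obtain_subset_with_card_n)
  obtain zs where "set zs = Z" "distinct zs"
    using finite_distinct_list[OF \<open>finite Z\<close>] by blast
  then show ?thesis
    using Z assms(1) by (intro that[of zs]) (auto simp: distinct_card)
qed

lemma kwise_indep_mono:
  assumes kw: "kwise_indep n k H" and "m \<le> k" "k \<le> n"
  shows "kwise_indep n m H"
  unfolding kwise_indep_def
proof (intro conjI allI impI)
  show H: "finite H" "H \<noteq> {}" and H_funcs: "H \<subseteq> {1..n} \<rightarrow>\<^sub>E {1..n}"
    using kw by (auto simp: kwise_indep_def)
  fix xs ys :: "nat list"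
  assume xs: "length xs = m \<and> length ys = m \<and> distinct xs \<and> set xs \<subseteq> {1..n} \<and> set ys \<subseteq> {1..n}"
  obtain zs where zs: "distinct (xs @ zs)" "length zs = k - length xs" "set zs \<subseteq> {1..n}"
    by (rule obtain_distinct_extension[of xs "{1..n}"]) (use xs \<open>m \<le> k\<close> \<open>k \<le> n\<close> in auto)
  then have xs_zs: "distinct (xs @ zs)" "length (xs @ zs) = k" "set (xs @ zs) \<subseteq> {1..n}"
    using xs \<open>m \<le> k\<close> by auto
  define Ws where "Ws = {ws. set ws \<subseteq> {1..n} \<and> length ws = k - m}"
  \<comment> \<open>Every h maps zs into {1..n}, so the event splits by the values on zs.\<close>
  have "{h\<in>H. map h xs = ys} = {h\<in>H. map h (xs @ zs) \<in> (@) ys ` Ws}"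
  proof -
    have "map h zs \<in> Ws" if "h \<in> H" for h
      using that H_funcs zs xs by (auto simp: Ws_def PiE_iff)
    then show ?thesis using xs by auto
  qed
  also have "real (card \<dots>) = real (card ((@) ys ` Ws)) * (real (card H) / real n ^ k)"
  proof (rule card_preimage_const_fibres[OF H(1)])
    show "finite ((@) ys ` Ws)"
      by (simp add: Ws_def finite_lists_length_eq)
    fix v assume "v \<in> (@) ys ` Ws"
    then obtain ws where "v = ys @ ws" "set ws \<subseteq> {1..n}" "length ws = k - m"
      by (auto simp: Ws_def)
    then have "length v = k" "set v \<subseteq> {1..n}"
      using xs \<open>m \<le> k\<close> by auto
    then show "real (card {h\<in>H. map h (xs @ zs) = v}) = real (card H) / real n ^ k"
      by (rule kwise_indep_card[OF kw xs_zs])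
  qed
  also have "card ((@) ys ` Ws) = n ^ (k - m)"
    by (subst card_image) (auto intro: inj_onI simp: Ws_def card_lists_length_eq)
  also have "real (n ^ (k - m)) * (real (card H) / real n ^ k) = real (card H) / real n ^ m"
  proof (cases "n = 0")
    case False
    have "real n ^ k = real n ^ m * real n ^ (k - m)"
      using \<open>m \<le> k\<close> by (simp flip: power_add)
    then show ?thesis using False by simp
  qed (use \<open>m \<le> k\<close> \<open>k \<le> n\<close> in simp)
  finally show "measure_pmf.prob (pmf_of_set H) {h. map h xs = ys} = 1 / real n ^ m"
    using H by (simp add: measure_pmf_of_set_Collect card_gt_0_iff)
qed

lemma kwise_indep_card_image_subset:
  assumes kw: "kwise_indep n k H" and V: "V \<subseteq> {1..n}" "card V = k" and L: "L \<subseteq> {1..n}"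
  shows "real (card {h\<in>H. h ` V \<subseteq> L}) = real (card H) * (real (card L) / real n) ^ k"
proof -
  have H: "finite H" using kw by (simp add: kwise_indep_def)
  have "finite V" using V(1) finite_subset by blast
  define xs where "xs = sorted_list_of_set V"
  have xs: "distinct xs" "length xs = k" "set xs = V"
    using \<open>finite V\<close> V(2) by (auto simp: xs_def)
  define Ys where "Ys = {ys. set ys \<subseteq> L \<and> length ys = k}"
  have "{h\<in>H. h ` V \<subseteq> L} = {h\<in>H. map h xs \<in> Ys}"
    using xs by (auto simp: Ys_def)
  also have "real (card \<dots>) = real (card Ys) * (real (card H) / real n ^ k)"
  proof (rule card_preimage_const_fibres[OF H])
    show "finite Ys"
      using L by (simp add: Ys_def finite_lists_length_eq finite_subset)
    fix ys assume "ys \<in> Ys"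
    then have "length ys = k" "set ys \<subseteq> {1..n}"
      using L by (auto simp: Ys_def)
    then show "real (card {h\<in>H. map h xs = ys}) = real (card H) / real n ^ k"
      using xs V(1) by (intro kwise_indep_card[OF kw]) auto
  qed
  also have "card Ys = card L ^ k"
    using finite_subset[OF L] by (simp add: Ys_def card_lists_length_eq)
  finally show ?thesis by (simp add: power_divide)
qed

definition only_hit :: "('a \<Rightarrow> 'b) set \<Rightarrow> 'a set \<Rightarrow> 'b set \<Rightarrow> 'a \<Rightarrow> ('a \<Rightarrow> 'b) set" where
  "only_hit H T L x = {h\<in>H. {y\<in>T. h y \<in> L} = {x}}"

text \<open>The first r + 1 terms of the inclusion-exclusion expansion of p (1 - p)^m.\<close>
definition incl_excl_trunc :: "nat \<Rightarrow> real \<Rightarrow> nat \<Rightarrow> real" where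
  "incl_excl_trunc m p r = (\<Sum>i\<le>r. (-1) ^ i * real (m choose i) * p ^ Suc i)"

lemma card_only_hit_bonferroni:
  assumes kw: "kwise_indep n k H" and "k \<le> n" and T: "T \<subseteq> {1..n}" "x \<in> T"
    and L: "L \<subseteq> {1..n}" and "r < k"
  defines "B \<equiv> real (card H) * incl_excl_trunc (card T - 1) (real (card L) / real n) r"
  shows "odd r \<Longrightarrow> B \<le> real (card (only_hit H T L x))"
    and "even r \<Longrightarrow> real (card (only_hit H T L x)) \<le> B"
proof -
  define Y where "Y = T - {x}"
  define Hx where "Hx = {h\<in>H. h x \<in> L}"
  have fin: "finite Hx" "finite Y"
    using kw finite_subset[OF T(1)] by (auto simp: kwise_indep_def Hx_def Y_def)
  have only_hit_eq: "only_hit H T L x = {h\<in>Hx. \<forall>y\<in>Y. h y \<notin> L}"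
    using T(2) by (auto simp: only_hit_def Hx_def Y_def)
  have "real (card {h\<in>Hx. \<forall>y\<in>U. h y \<in> L})
      = real (card H) * (real (card L) / real n) ^ Suc (card U)"
    if "U \<subseteq> Y" "card U \<le> r" for U
  proof -
    have "finite U" "x \<notin> U" using that fin(2) finite_subset by (auto simp: Y_def)
    then have card_xU: "card (insert x U) = Suc (card U)" by simp
    have event_eq: "{h\<in>Hx. \<forall>y\<in>U. h y \<in> L} = {h\<in>H. h ` insert x U \<subseteq> L}"
      by (auto simp: Hx_def)
    have "insert x U \<subseteq> {1..n}"
      using that T by (auto simp: Y_def)
    moreover have "kwise_indep n (card (insert x U)) H"
      using that \<open>r < k\<close> \<open>k \<le> n\<close> card_xU by (intro kwise_indep_mono[OF kw]) auto
    ultimately show ?thesis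
      unfolding event_eq card_xU[symmetric] by (intro kwise_indep_card_image_subset[OF _ _ refl L])
  qed
  then have "(\<Sum>U | U \<subseteq> Y \<and> card U \<le> r. (-1) ^ card U * real (card {h\<in>Hx. \<forall>y\<in>U. h y \<in> L}))
      = (\<Sum>U | U \<subseteq> Y \<and> card U \<le> r. (-1) ^ card U * (real (card H) * (real (card L) / real n) ^ Suc (card U)))"
    by (intro sum.cong) auto
  also have "\<dots> = (\<Sum>i\<le>r. real (card Y choose i) * ((-1) ^ i * (real (card H) * (real (card L) / real n) ^ Suc i)))"
    by (rule sum_subsets_by_card[OF fin(2)])
  also have "\<dots> = B"
    using T(2) finite_subset[OF T(1)]
    unfolding B_def incl_excl_trunc_def sum_distrib_left by (simp add: Y_def mult_ac)
  finally have B_eq: "B = (\<Sum>U | U \<subseteq> Y \<and> card U \<le> r. (-1) ^ card U * real (card {h\<in>Hx. \<forall>y\<in>U. h y \<in> L}))" ..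
  show "odd r \<Longrightarrow> B \<le> real (card (only_hit H T L x))"
    unfolding B_eq only_hit_eq by (rule bonferroni_card(1)[OF fin])
  show "even r \<Longrightarrow> real (card (only_hit H T L x)) \<le> B"
    unfolding B_eq only_hit_eq by (rule bonferroni_card(2)[OF fin])
qed

lemma cond_prob_only_hit:
  assumes H: "finite H" "H \<noteq> {}" and "finite T" "x1 \<in> T"
  shows "cond_prob H (\<lambda>h. {y\<in>T. h y \<in> L} = {x1}) (\<lambda>h. card {y\<in>T. h y \<in> L} = 1)
       = real (card (only_hit H T L x1)) / (\<Sum>x\<in>T. real (card (only_hit H T L x)))"
proof -
  have num: "{h\<in>H. {y\<in>T. h y \<in> L} = {x1} \<and> card {y\<in>T. h y \<in> L} = 1} = only_hit H T L x1"
    by (auto simp: only_hit_def)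
  have "{h\<in>H. card {y\<in>T. h y \<in> L} = 1} = (\<Union>x\<in>T. only_hit H T L x)"
    by (auto simp: only_hit_def card_1_singleton_iff)
  also have "card \<dots> = (\<Sum>x\<in>T. card (only_hit H T L x))"
    using H(1) \<open>finite T\<close> by (intro card_UN_disjoint) (auto simp: only_hit_def)
  finally have den: "real (card {h\<in>H. card {y\<in>T. h y \<in> L} = 1}) = (\<Sum>x\<in>T. real (card (only_hit H T L x)))"
    by simp
  have "card H > 0" using H by (simp add: card_gt_0_iff)
  then show ?thesis
    unfolding cond_prob_def measure_pmf_of_set_Collect[OF H] num den by simp
qed

lemma one_over_card_le_divide_sum:
  fixes a :: "'a \<Rightarrow> real"
  assumes "finite T" "x1 \<in> T" "a x1 > 0"
    and "\<And>x. x \<in> T \<Longrightarrow> 0 \<le> a x" "\<And>x. x \<in> T \<Longrightarrow> a x \<le> c * a x1"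
  shows "1 / (real (card T) * c) \<le> a x1 / (\<Sum>x\<in>T. a x)"
proof -
  have "a x1 \<le> (\<Sum>x\<in>T. a x)"
    using assms by (intro member_le_sum) auto
  moreover have "(\<Sum>x\<in>T. a x) \<le> real (card T) * c * a x1"
    using sum_mono[of T a "\<lambda>_. c * a x1"] assms(5) by simp
  ultimately have "a x1 / (real (card T) * c * a x1) \<le> a x1 / (\<Sum>x\<in>T. a x)"
    using assms(3) by (intro divide_left_mono) auto
  then show ?thesis using assms(3) by simp
qed

lemma choose_le_power: "n choose k \<le> n ^ k"
proof -
  have "n choose k \<le> (n choose k) * fact k"
    using fact_ge_1[of k, where 'a = nat] by simp
  then show ?thesis
    using binomial_fact_pow[of n k] by linarith
qed

lemma card_only_hit_nearly_uniform:
  assumes kw: "kwise_indep n k H" and "k \<le> n" and T: "T \<subseteq> {1..n}" "x \<in> T" "x1 \<in> T"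
    and L: "L \<subseteq> {1..n}" and sparse: "2 * (card T - 1) * card L \<le> n" and r: "odd r" "r < k"
  defines "p \<equiv> real (card L) / real n"
  shows "real (card H) * p / 2 \<le> real (card (only_hit H T L x1))"
    and "real (card (only_hit H T L x)) \<le> (1 + 2 / 2 ^ r) * real (card (only_hit H T L x1))"
proof -
  define N where "N = real (card H)"
  define m where "m = card T - 1"
  have "n > 0" using r \<open>k \<le> n\<close> by simp
  then have p: "0 \<le> p" "real m * p \<le> 1 / 2"
    using sparse by (simp_all add: p_def m_def field_simps flip: of_nat_mult)
  have "N * (p * (real m * p)) \<le> N * (p * (1 / 2))"
    using p by (intro mult_left_mono) (simp_all add: N_def)
  then have "N * p / 2 \<le> N * incl_excl_trunc m p 1"
    unfolding incl_excl_trunc_def by (simp add: power2_eq_square algebra_simps)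
  also have "\<dots> \<le> real (card (only_hit H T L x1))"
    using card_only_hit_bonferroni(1)[OF kw \<open>k \<le> n\<close> T(1,3) L, of 1] odd_pos[OF r(1)] r(2)
    by (simp add: N_def m_def p_def)
  finally show lower: "N * p / 2 \<le> real (card (only_hit H T L x1))"
    unfolding N_def .
  obtain r' where r': "r = Suc r'" "even r'" using r(1) by (cases r) auto
  \<comment> \<open>The even truncation r' bounds every count from above and exceeds the odd one by a single term.\<close>
  have "real (card (only_hit H T L x)) \<le> N * incl_excl_trunc m p r'"
    using card_only_hit_bonferroni(2)[OF kw \<open>k \<le> n\<close> T(1,2) L, of r'] r r'
    by (simp add: N_def m_def p_def)
  also have "\<dots> = N * incl_excl_trunc m p r + N * p * (real (m choose r) * p ^ r)"
    using r' by (simp add: incl_excl_trunc_def algebra_simps)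
  also have "\<dots> \<le> real (card (only_hit H T L x1)) + N * p * (1 / 2) ^ r"
  proof (rule add_mono)
    show "N * incl_excl_trunc m p r \<le> real (card (only_hit H T L x1))"
      using card_only_hit_bonferroni(1)[OF kw \<open>k \<le> n\<close> T(1,3) L] r
      by (simp add: N_def m_def p_def)
    have "real (m choose r) * p ^ r \<le> (real m * p) ^ r"
      using p(1) choose_le_power[of m r]
      by (simp add: power_mult_distrib mult_right_mono flip: of_nat_power)
    also have "\<dots> \<le> (1 / 2) ^ r"
      using p by (intro power_mono) (simp_all add: m_def)
    finally show "N * p * (real (m choose r) * p ^ r) \<le> N * p * (1 / 2) ^ r"
      using p(1) by (intro mult_left_mono) (simp_all add: N_def)
  qed
  also have "\<dots> \<le> (1 + 2 / 2 ^ r) * real (card (only_hit H T L x1))"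
    using lower by (simp add: algebra_simps power_one_over divide_right_mono)
  finally show "real (card (only_hit H T L x)) \<le> (1 + 2 / 2 ^ r) * real (card (only_hit H T L x1))" .
qed

lemma obtain_odd_truncation_order:
  assumes "2 \<le> n" "real n ^ 2 \<le> 2 ^ k"
  obtains r where "odd r" "r < k" "real n ^ 2 \<le> 2 ^ (r + 2)"
proof -
  have "k \<ge> 2"
  proof (rule ccontr)
    assume "\<not> k \<ge> 2"
    then have "(2::real) ^ k \<le> 2 ^ 1" by (intro power_increasing) auto
    moreover have "(2::real) ^ 2 \<le> real n ^ 2" using assms(1) by (intro power_mono) auto
    ultimately show False using assms(2) by simp
  qed
  define r where "r = (if even k then k - 1 else k - 2)"
  have "odd r" "r < k" "k \<le> r + 2"
    using \<open>k \<ge> 2\<close> by (auto simp: r_def)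
  moreover have "real n ^ 2 \<le> 2 ^ (r + 2)"
    using assms(2) power_increasing[OF \<open>k \<le> r + 2\<close>, of "2::real"] by linarith
  ultimately show ?thesis using that by blast
qed

lemma mult_one_plus_two_div_power_le:
  assumes "2 * real t \<le> real n" "real n ^ 2 \<le> 2 ^ (r + 2)" "0 < n"
  shows "real t * (1 + 2 / 2 ^ r) \<le> real t + 4 / real n"
proof -
  have "real t * (2 / 2 ^ r) \<le> real t * (8 / real n ^ 2)"
    using assms(2,3) by (intro mult_left_mono) (simp_all add: field_simps)
  also have "\<dots> \<le> 4 / real n"
    using assms(1,3) by (simp add: field_simps power2_eq_square)
  finally show ?thesis by (simp add: algebra_simps)
qed

lemma cond_prob_only_hit_lower_bound:
  assumes kw: "kwise_indep n k H" and "k \<le> n" and nk: "real n ^ 2 \<le> 2 ^ k"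
    and T: "T \<subseteq> {1..n}" "x1 \<in> T" and L: "L \<subseteq> {1..n}" "L \<noteq> {}"
    and sparse: "2 * card T * card L \<le> n"
  shows "1 / (real (card T) + 4 / real n)
       \<le> cond_prob H (\<lambda>h. {y\<in>T. h y \<in> L} = {x1}) (\<lambda>h. card {y\<in>T. h y \<in> L} = 1)"
proof -
  have H: "finite H" "H \<noteq> {}" using kw by (auto simp: kwise_indep_def)
  have fin: "finite T" "finite L" using T(1) L(1) finite_subset by auto
  then have "card T \<ge> 1" "card L \<ge> 1" using T(2) L(2) by (auto simp: Suc_le_eq card_gt_0_iff)
  then have "2 * card T * 1 \<le> 2 * card T * card L"
    by (intro mult_le_mono2)
  then have "2 * card T \<le> n" using sparse by linarith
  then have t_le: "2 * real (card T) \<le> real n" and "n \<ge> 2"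
    using \<open>card T \<ge> 1\<close> by linarith+
  obtain r where r: "odd r" "r < k" "real n ^ 2 \<le> 2 ^ (r + 2)"
    using obtain_odd_truncation_order[OF \<open>n \<ge> 2\<close> nk] .
  define a where "a x = real (card (only_hit H T L x))" for x
  have sparse': "2 * (card T - 1) * card L \<le> n" using sparse by (simp add: algebra_simps)
  have "0 < real (card H) * (real (card L) / real n) / 2"
    using H fin(2) L(2) \<open>n \<ge> 2\<close> by (intro divide_pos_pos mult_pos_pos) (simp_all add: card_gt_0_iff)
  then have "0 < a x1"
    using card_only_hit_nearly_uniform(1)[OF kw \<open>k \<le> n\<close> T(1,2,2) L(1) sparse' r(1,2)] by (simp add: a_def)
  then have "1 / (real (card T) * (1 + 2 / 2 ^ r)) \<le> a x1 / (\<Sum>x\<in>T. a x)"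
    using card_only_hit_nearly_uniform(2)[OF kw \<open>k \<le> n\<close> T(1) _ T(2) L(1) sparse' r(1,2)]
    by (intro one_over_card_le_divide_sum[OF fin(1) T(2)]) (auto simp: a_def)
  moreover have "real (card T) * (1 + 2 / 2 ^ r) \<le> real (card T) + 4 / real n"
    using t_le r(3) \<open>n \<ge> 2\<close> by (intro mult_one_plus_two_div_power_le) auto
  moreover have "0 < real (card T) * (1 + 2 / 2 ^ r)"
    using \<open>card T \<ge> 1\<close> by (simp add: add_pos_pos)
  ultimately have "1 / (real (card T) + 4 / real n) \<le> a x1 / (\<Sum>x\<in>T. a x)"
    by (meson frac_le order_trans zero_le_one order_refl)
  then show ?thesis
    unfolding cond_prob_only_hit[OF H fin(1) T(2)] a_def .
qed

definition level_interval :: "nat \<Rightarrow> nat set" where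
  "level_interval j = {v. 2 powr (real j - 1) < real v \<and> real v \<le> 2 ^ j}"

lemma level_set_eq: "level_set n h j = {x\<in>{1..n}. h x \<in> level_interval j}"
  by (simp add: level_set_def level_interval_def)

lemma level_interval_subset: "level_interval j \<subseteq> {1..2 ^ j}"
proof
  fix v assume v: "v \<in> level_interval j"
  then have "2 powr (real j - 1) < real v"
    by (simp add: level_interval_def)
  moreover have "0 < (2::real) powr (real j - 1)"
    by simp
  ultimately have "0 < v"
    by linarith
  moreover have "real v \<le> real (2 ^ j)"
    using v by (simp add: level_interval_def)
  ultimately show "v \<in> {1..2 ^ j}"
    by (simp only: atLeastAtMost_iff of_nat_le_iff) simp
qed

lemma power_in_level_interval: "2 ^ j \<in> level_interval j"
  by (simp add: level_interval_def powr_realpow[symmetric])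

lemma two_power_floor_log_le:
  assumes "1 \<le> x"
  shows "2 ^ nat \<lfloor>log 2 x\<rfloor> \<le> (x :: real)"
proof -
  have "0 \<le> \<lfloor>log 2 x\<rfloor>" using assms by simp
  then have "2 ^ nat \<lfloor>log 2 x\<rfloor> = (2::real) powr \<lfloor>log 2 x\<rfloor>"
    by (simp add: powr_realpow[symmetric])
  also have "\<dots> \<le> 2 powr log 2 x" by simp
  also have "\<dots> = x" using assms by simp
  finally show ?thesis .
qed

lemma level_interval_floor_log:
  assumes "1 \<le> t" "2 * real t \<le> real n"
  defines "j \<equiv> nat \<lfloor>log 2 (real n / (2 * real t))\<rfloor>"
  shows "level_interval j \<subseteq> {1..n}" and "2 * t * card (level_interval j) \<le> n"
proof -
  have "2 ^ j \<le> real n / (2 * real t)"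
    unfolding j_def using assms(1,2) by (intro two_power_floor_log_le) (simp add: field_simps)
  then have "real (2 * t * 2 ^ j) \<le> real n"
    using assms(1) by (simp add: field_simps)
  then have tj: "2 * t * 2 ^ j \<le> n"
    by (simp only: of_nat_le_iff)
  moreover have "card (level_interval j) \<le> 2 ^ j"
    using card_mono[OF _ level_interval_subset, of j] by simp
  ultimately show "2 * t * card (level_interval j) \<le> n"
    using mult_le_mono2[of _ "2 ^ j" "2 * t"] by (meson le_trans)
  have "2 ^ j \<le> 2 * t * 2 ^ j" using assms(1) by simp
  then have "{1..2 ^ j} \<subseteq> {1..n}"
    using tj by (simp only: atLeastatMost_subset_iff) linarith
  then show "level_interval j \<subseteq> {1..n}"
    using level_interval_subset[of j] by (rule subset_trans[rotated])
qed

lemma square_le_two_power_of_log_le: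
  assumes "0 < n" "2 * log 2 (real n) \<le> real k"
  shows "real n ^ 2 \<le> 2 ^ k"
proof -
  have "real n ^ 2 = 2 powr (2 * log 2 (real n))"
    using assms(1) by (simp add: powr_mult_base powr_powr[symmetric] mult.commute[of 2] powr_realpow)
  also have "\<dots> \<le> 2 powr real k" using assms(2) by simp
  finally show ?thesis by (simp add: powr_realpow)
qed

theorem mainTheorem9:
  "\<exists>\<epsilon> :: nat \<Rightarrow> real. \<epsilon> \<longlonglongrightarrow> 0 \<and>
     (\<forall>n k H t T x1 j.
        kwise_indep n k H \<longrightarrow> real k \<ge> 2 * log 2 (real n) \<longrightarrow> k \<le> n \<longrightarrow>
        T \<subseteq> {1..n} \<longrightarrow> card T = t \<longrightarrow> x1 \<in> T \<longrightarrow> real t < real n / 2 \<longrightarrow>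
        j = nat \<lfloor>log 2 (real n / (2 * real t))\<rfloor> \<longrightarrow>
        cond_prob H (\<lambda>h. level_set n h j \<inter> T = {x1}) (\<lambda>h. card (level_set n h j \<inter> T) = 1)
          \<ge> 1 / (real t + \<epsilon> n))"
proof (intro exI[of _ "\<lambda>n. 4 / real n"] conjI allI impI)
  show "(\<lambda>n. 4 / real n) \<longlonglongrightarrow> 0" by (rule lim_const_over_n)
  fix n k H t T x1 j
  assume kw: "kwise_indep n k H" and k: "real k \<ge> 2 * log 2 (real n)" "k \<le> n"
    and T: "T \<subseteq> {1..n}" "card T = t" "x1 \<in> T" and t: "real t < real n / 2"
    and j: "j = nat \<lfloor>log 2 (real n / (2 * real t))\<rfloor>"
  have "t \<ge> 1" using T finite_subset by (fastforce simp: Suc_le_eq card_gt_0_iff)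
  moreover have "2 * real t \<le> real n" using t by simp
  ultimately have L: "level_interval j \<subseteq> {1..n}" "2 * card T * card (level_interval j) \<le> n"
    unfolding j T(2) by (rule level_interval_floor_log)+
  have "0 < n" using t \<open>t \<ge> 1\<close> by linarith
  have "level_interval j \<noteq> {}" using power_in_level_interval by blast
  have level_eq: "level_set n h j \<inter> T = {y\<in>T. h y \<in> level_interval j}" for h
    using T(1) by (auto simp: level_set_eq)
  show "1 / (real t + 4 / real n)
      \<le> cond_prob H (\<lambda>h. level_set n h j \<inter> T = {x1}) (\<lambda>h. card (level_set n h j \<inter> T) = 1)"
    unfolding level_eq T(2)[symmetric]
    by (rule cond_prob_only_hit_lower_bound[OF kw k(2) square_le_two_power_of_log_le[OF \<open>0 < n\<close> k(1)]
          T(1,3) L(1) \<open>level_interval j \<noteq> {}\<close> L(2)])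
qed

end
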